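(* Let $p$ be an odd prime, $q\in\mathbb{C}_p$ with $|q-1|_p<1$, $\alpha\in\mathbb{N}\cup\{0\}$, $h\in\mathbb{N}$, and let $n,k$ be nonnegative integers with $n>k$. Then \[ \sum_{l=0}^{n-k}\binom{n-k}{l}(-1)^l\frac{\widetilde{G}_{l+k+1,q}^{(\alpha,h)}}{l+k+1}=\begin{cases}[2]_q+q^{h+1}\dfrac{\widetilde{G}_{n+1,q^{-1}}^{(\alpha,h)}}{n+1} & \text{if } k=0,\\[2mm] \displaystyle\sum_{l=0}^{k}\binom{k}{l}(-1)^{k+l}\Big\{[2]_q+q^{h+1}\frac{\widetilde{G}_{n-l+1,q^{-1}}^{(\alpha,h)}}{n-l+1}\Big\} & \text{if } k\neq 0.\end{cases} \]
   Context: For $x\in\mathbb{Z}_p$ write $[x]_q=\frac{1-q^x}{1-q}$, and $[2]_q=1+q$. For a uniformly differentiable $f:\mathbb{Z}_p\to\mathbb{C}_p$, the fermionic $p$-adic $q$-integral is $\int_{\mathbb{Z}_p}f(\xi)\,d\mu_{-q}(\xi)=\lim_{N\to\infty}\frac{1}{[p^N]_{-q}}\sum_{\xi=0}^{p^N-1}f(\xi)(-q)^{\xi}$, with $[p^N]_{-q}=\frac{1+q^{p^N}}{1+q}$. The $(h,q)$-Genocchi polynomials with weight $\alpha$ are defined for $n\ge0$, $x\in\mathbb{Z}_p$ by $\frac{\widetilde{G}_{n+1,q}^{(\alpha,h)}(x)}{n+1}=\int_{\mathbb{Z}_p}q^{(h-1)\xi}[x+\xi]_{q^{\alpha}}^n\,d\mu_{-q}(\xi)$,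 and the numbers are $\widetilde{G}_{n,q}^{(\alpha,h)}=\widetilde{G}_{n,q}^{(\alpha,h)}(0)$. The numbers $\widetilde{G}_{n,q^{-1}}^{(\alpha,h)}$ are obtained by replacing $q$ by $q^{-1}$ everywhere: $\frac{\widetilde{G}_{n+1,q^{-1}}^{(\alpha,h)}}{n+1}=\int_{\mathbb{Z}_p}q^{(1-h)\xi}[\xi]_{q^{-\alpha}}^n\,d\mu_{-q^{-1}}(\xi)$. *)

theory Defs
  imports Complex_Main "HOL-Computational_Algebra.Computational_Algebra"
begin

text \<open>We work in an arbitrary field K carrying an
absolute value absv that is non-archimedean, restricts to the p-adic absolute value on
the integers, and makes K complete and algebraically closed (C_p is such a field).\<close>

definition Cp_like :: "nat \<Rightarrow> ('a::field \<Rightarrow> real) \<Rightarrow> bool" where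
  "Cp_like p absv \<longleftrightarrow>
     (\<forall>x. absv x \<ge> 0) \<and>
     (\<forall>x. absv x = 0 \<longleftrightarrow> x = 0) \<and>
     (\<forall>x y. absv (x * y) = absv x * absv y) \<and>
     (\<forall>x y. absv (x + y) \<le> max (absv x) (absv y)) \<and>
     (\<forall>m::int. m \<noteq> 0 \<longrightarrow>
        absv (of_int m) = real p powr (- real (multiplicity (int p) m))) \<and>
     (\<forall>X::nat \<Rightarrow> 'a. (\<forall>e>0. \<exists>N. \<forall>m\<ge>N. \<forall>n\<ge>N. absv (X m - X n) < e) \<longrightarrow>
        (\<exists>L. (\<lambda>n. absv (X n - L)) \<longlonglongrightarrow> 0)) \<and>
     (\<forall>P::'a poly. degree P \<noteq> 0 \<longrightarrow> (\<exists>x. poly P x = 0))"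

definition qnum :: "'a::field \<Rightarrow> nat \<Rightarrow> 'a" where
  "qnum q x = (if q = 1 then of_nat x else (1 - q ^ x) / (1 - q))"

definition ferm_int :: "nat \<Rightarrow> ('a::field \<Rightarrow> real) \<Rightarrow> 'a \<Rightarrow> (nat \<Rightarrow> 'a) \<Rightarrow> 'a" where
  "ferm_int p absv q f = (THE L. (\<lambda>N. absv (
      (\<Sum>\<xi><p ^ N. f \<xi> * (- q) ^ \<xi>) / ((1 + q ^ (p ^ N)) / (1 + q)) - L)) \<longlonglongrightarrow> 0)"

text \<open>(h,q)-Genocchi numbers with weight alpha:
  G_{n+1}/(n+1) = int q^{(h-1) xi} [xi]_{q^alpha}^n d mu_{-q}(xi); G_0 := 0.\<close>
definition genocchi :: "nat \<Rightarrow> ('a::field \<Rightarrow> real) \<Rightarrow> 'a \<Rightarrow> nat \<Rightarrow> nat \<Rightarrow> nat \<Rightarrow> 'a" where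
  "genocchi p absv q \<alpha> h n =
     (if n = 0 then 0 else
      of_nat n * ferm_int p absv q (\<lambda>\<xi>. q ^ ((h - 1) * \<xi>) * qnum (q ^ \<alpha>) \<xi> ^ (n - 1)))"

end

theory Submission
  imports Defs
begin

text \<open>
  Write \<open>I_q(f)\<close> for the fermionic integral and put \<open>t = q^(h-1)\<close>, \<open>s = q^\<alpha>\<close>, so that
  \<open>G_(i+1,q)/(i+1) = I_q(t^x [x]_s^i)\<close>. Expanding \<open>[x]_s^k (1 - [x]_s)^(n-k)\<close> binomially, once
  around \<open>[x]_s\<close> and once around \<open>1 - [x]_s\<close>, writes the integral of \<open>t^x [x]_s^k (1 - [x]_s)^(n-k)\<close>
  as either side of the identity, given the reflection formula
  \<open>[2]_q + q^(h+1) G_(m+1,1/q)/(m+1) = I_q(t^x (1 - [x]_s)^m)\<close> for \<open>m \<ge> 1\<close>. That formula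
  follows by substituting \<open>x \<mapsto> p^N - 1 - x\<close> in the Riemann sums for \<open>1/q\<close>, which turns
  \<open>[p^N - 1 - x]_(1/s)\<close> into \<open>1 - [x + 2]_s\<close> in the limit, and applying the functional equation
  \<open>q I_q(f(x + 1)) + I_q(f) = [2]_q f(0)\<close> twice.

  All limits come from \<open>u^(p^N) \<rightarrow> 1\<close> for \<open>|u - 1| < 1\<close> (the binomial theorem and
  \<open>p | (p choose j)\<close>), and the integrals exist because the functional equation expresses
  \<open>I_q(t^x [x]_s^l)\<close> through lower powers.
\<close>

section \<open>Identities for \<open>q\<close>-numbers and binomial sums\<close>

lemma qnum_0 [simp]: "qnum s 0 = 0"
  unfolding qnum_def by simp

lemma qnum_Suc: "qnum s (Suc x) = 1 + s * qnum s x"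
  unfolding qnum_def by (auto simp: field_simps)

lemma qnum_Suc_right: "qnum s (Suc x) = qnum s x + s ^ x"
  unfolding qnum_def by (auto simp: field_simps)

lemma qnum_add: "qnum s (a + b) = qnum s a + s ^ a * qnum s b"
  by (induction a) (simp_all add: qnum_Suc algebra_simps)

lemma qnum_inverse_Suc:
  assumes "s \<noteq> 0"
  shows "qnum (inverse s) (Suc j) = inverse s ^ j * qnum s (Suc j)"
proof (induction j)
  case (Suc j)
  have "qnum (inverse s) (Suc (Suc j)) = 1 + inverse s * (inverse s ^ j * qnum s (Suc j))"
    using Suc by (simp only: qnum_Suc[of "inverse s" "Suc j"])
  also have "\<dots> = inverse s ^ Suc j * qnum s (Suc (Suc j))"
    using assms by (simp add: qnum_Suc_right field_simps)
  finally show ?case .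
qed (simp add: qnum_Suc)

lemma qnum_reflect:
  assumes "s \<noteq> 0" "j < M"
  shows "qnum (inverse s) (M - Suc j) = qnum (inverse s) M - inverse s ^ (M - 1) * qnum s (Suc j)"
proof -
  have "qnum (inverse s) M = qnum (inverse s) (M - Suc j) + inverse s ^ (M - Suc j) * qnum (inverse s) (Suc j)"
    using qnum_add[of "inverse s" "M - Suc j" "Suc j"] assms(2) by simp
  also have "inverse s ^ (M - Suc j) * qnum (inverse s) (Suc j) = inverse s ^ (M - 1) * qnum s (Suc j)"
    using assms by (simp add: qnum_inverse_Suc mult.assoc flip: power_add)
  finally show ?thesis by simp
qed

lemma qnum_Suc_power:
  "t ^ Suc x * qnum s (Suc x) ^ l = (\<Sum>i\<le>l. (t * (of_nat (l choose i) * s ^ i)) * (t ^ x * qnum s x ^ i))"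
proof -
  have "qnum s (Suc x) ^ l = (\<Sum>i\<le>l. of_nat (l choose i) * (s * qnum s x) ^ i)"
    using binomial_ring[of "s * qnum s x" 1 l] by (simp add: qnum_Suc add.commute)
  then show ?thesis
    by (simp add: sum_distrib_left power_mult_distrib mult_ac)
qed

lemma power_times_one_minus_power:
  fixes x :: "'a::comm_ring_1"
  shows "x ^ k * (1 - x) ^ m = (\<Sum>l=0..m. of_nat (m choose l) * (-1) ^ l * x ^ (l + k))"
proof -
  have "(1 - x) ^ m = (\<Sum>l\<le>m. of_nat (m choose l) * (- x) ^ l)"
    using binomial_ring[of "- x" 1 m] by simp
  then show ?thesis
    by (simp add: atMost_atLeast0 sum_distrib_left power_add power_minus[of x] mult_ac)
qed

lemma one_minus_power_times_power:
  fixes y :: "'a::comm_ring_1"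
  assumes "k \<le> n"
  shows "(1 - y) ^ k * y ^ (n - k) = (\<Sum>l=0..k. of_nat (k choose l) * (-1) ^ (k + l) * y ^ (n - l))"
proof -
  have "(1 - y) ^ k = (-1) ^ k * (-1 + y) ^ k"
    by (simp flip: power_mult_distrib)
  also have "(-1 + y) ^ k = (\<Sum>l\<le>k. of_nat (k choose l) * (-1) ^ l * y ^ (k - l))"
    by (rule binomial_ring)
  finally have "(1 - y) ^ k * y ^ (n - k) = (\<Sum>l\<le>k. of_nat (k choose l) * (-1) ^ (k + l) * (y ^ (k - l) * y ^ (n - k)))"
    by (simp add: sum_distrib_left sum_distrib_right power_add mult_ac)
  also have "\<dots> = (\<Sum>l\<le>k. of_nat (k choose l) * (-1) ^ (k + l) * y ^ (n - l))"
    using assms by (intro sum.cong refl) (simp flip: power_add)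
  finally show ?thesis by (simp add: atMost_atLeast0)
qed

lemma alternating_weight_reflect:
  fixes q :: "'a::field"
  assumes "q \<noteq> 0" "1 + q ^ M \<noteq> 0" "odd M" "j < M"
  shows "(1 + inverse q) / (1 + inverse q ^ M) * (- inverse q) ^ (M - Suc j) = (1 + q) / (1 + q ^ M) * (- q) ^ j"
proof -
  obtain a where M: "M = Suc (a + j)" and a: "a = M - Suc j"
    using assms(4) by (intro that[of "M - Suc j"]) auto
  have sign: "(-1 :: 'a) ^ a = (-1) ^ j"
    using assms(3) unfolding M minus_one_power_iff by auto
  have "q * (1 + q ^ M) \<noteq> 0"
    using assms(1,2) by simp
  then have A: "(1 + inverse q) / (1 + inverse q ^ M) = q ^ (a + j) * ((1 + q) / (1 + q ^ M))"
    using assms unfolding M by (simp add: power_inverse field_simps)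
  have B: "(- inverse q) ^ a = (-1) ^ j * inverse (q ^ a)"
    by (simp add: power_minus[of "inverse q"] sign power_inverse)
  have C: "q ^ (a + j) * inverse (q ^ a) = q ^ j"
    using assms(1) by (simp add: power_add)
  show ?thesis
    unfolding a[symmetric] A B power_minus[of q j] C[symmetric] by (simp only: mult_ac)
qed

lemma alternating_sum_reflect:
  fixes q :: "'a::field"
  assumes "q \<noteq> 0" "1 + q ^ M \<noteq> 0" "odd M"
  shows "(1 + inverse q) / (1 + inverse q ^ M) * (\<Sum>\<xi><M. f \<xi> * (- inverse q) ^ \<xi>)
       = (1 + q) / (1 + q ^ M) * (\<Sum>j<M. f (M - Suc j) * (- q) ^ j)"
proof -
  have "(\<Sum>\<xi><M. f \<xi> * (- inverse q) ^ \<xi>) = (\<Sum>j<M. f (M - Suc j) * (- inverse q) ^ (M - Suc j))"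
    by (rule sum.nat_diff_reindex[symmetric])
  then show ?thesis
    using alternating_weight_reflect[OF assms]
    by (simp add: sum_distrib_left mult_ac)
qed

locale ultrametric_abs =
  fixes absv :: "'a::field \<Rightarrow> real"
  assumes absv_nonneg: "0 \<le> absv x"
    and absv_eq_0_iff: "absv x = 0 \<longleftrightarrow> x = 0"
    and absv_mult: "absv (x * y) = absv x * absv y"
    and absv_add_le_max: "absv (x + y) \<le> max (absv x) (absv y)"
begin

declare absv_eq_0_iff [simp] absv_mult [simp]

lemma absv_0 [simp]: "absv 0 = 0"
  by simp

lemma absv_1 [simp]: "absv 1 = 1"
  using absv_mult[of 1 1] absv_eq_0_iff[of 1] by simp

lemma absv_minus [simp]: "absv (- x) = absv x"
proof -
  have "absv (-1) ^ 2 = 1"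
    using absv_mult[of "-1" "-1"] by (simp add: power2_eq_square)
  then have "absv (-1) = 1"
    using absv_nonneg[of "-1"] by (simp add: power2_eq_1_iff)
  then show ?thesis
    using absv_mult[of "-1" x] by simp
qed

lemma absv_minus_commute: "absv (x - y) = absv (y - x)"
  using absv_minus[of "x - y"] by simp

lemma absv_power [simp]: "absv (x ^ n) = absv x ^ n"
  by (induction n) simp_all

lemma absv_inverse [simp]: "absv (inverse x) = inverse (absv x)"
  using absv_mult[of x "inverse x"] by (cases "x = 0") (simp_all add: field_simps del: absv_mult)

lemma absv_divide [simp]: "absv (x / y) = absv x / absv y"
  by (simp add: divide_inverse)

lemma absv_diff_le_max: "absv (x - y) \<le> max (absv x) (absv y)"
  using absv_add_le_max[of x "- y"] by simp

lemma absv_triangle: "absv (x + y) \<le> absv x + absv y"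
  using absv_add_le_max[of x y] absv_nonneg[of x] absv_nonneg[of y] by linarith

lemma absv_sum_le:
  assumes "\<And>i. i \<in> A \<Longrightarrow> absv (f i) \<le> B" "0 \<le> B"
  shows "absv (\<Sum>i\<in>A. f i) \<le> B"
  using assms
proof (induction A rule: infinite_finite_induct)
  case (insert x F)
  then show ?case
    using absv_add_le_max[of "f x" "sum f F"] by force
qed simp_all

lemma absv_eq_if_close:
  assumes "absv (x - y) < absv y"
  shows "absv x = absv y"
  using absv_add_le_max[of "x - y" y] absv_add_le_max[of x "y - x"] assms absv_minus_commute[of x y]
  by auto

lemma absv_power_diff_le:
  assumes "absv a \<le> 1" "absv b \<le> 1"
  shows "absv (a ^ n - b ^ n) \<le> absv (a - b)"
proof (induction n)
  case (Suc n)
  have "a ^ Suc n - b ^ Suc n = a * (a ^ n - b ^ n) + (a - b) * b ^ n"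
    by (simp add: algebra_simps)
  then have "absv (a ^ Suc n - b ^ Suc n) \<le> max (absv a * absv (a ^ n - b ^ n)) (absv (a - b) * absv b ^ n)"
    using absv_add_le_max[of "a * (a ^ n - b ^ n)" "(a - b) * b ^ n"] by simp
  moreover have "absv a * absv (a ^ n - b ^ n) \<le> 1 * absv (a - b)"
    using Suc assms(1) absv_nonneg by (intro mult_mono) auto
  moreover have "absv (a - b) * absv b ^ n \<le> absv (a - b)"
    using assms(2) absv_nonneg by (simp add: mult_left_le power_le_one)
  ultimately show ?case by simp
qed (simp add: absv_nonneg)

definition tends_to :: "(nat \<Rightarrow> 'a) \<Rightarrow> 'a \<Rightarrow> bool" where
  "tends_to X L \<longleftrightarrow> (\<lambda>N. absv (X N - L)) \<longlonglongrightarrow> 0"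

lemma tends_to_dominated:
  assumes "\<And>N. absv (X N - L) \<le> e N" "e \<longlonglongrightarrow> 0"
  shows "tends_to X L"
  unfolding tends_to_def
proof (rule tendsto_0_le[OF assms(2), where K = 1])
  have "norm (absv (X N - L)) \<le> norm (e N) * 1" for N
    using assms(1)[of N] absv_nonneg[of "X N - L"] by simp
  then show "\<forall>\<^sub>F N in sequentially. norm (absv (X N - L)) \<le> norm (e N) * 1"
    by simp
qed

lemma tends_to_const: "tends_to (\<lambda>N. c) c"
  by (simp add: tends_to_def)

lemma tends_to_absv:
  assumes "tends_to X L"
  shows "(\<lambda>N. absv (X N)) \<longlonglongrightarrow> absv L"
proof -
  have bound: "norm (absv (X N) - absv L) \<le> norm (absv (X N - L)) * 1" for N
  proof -
    have "absv (X N) \<le> absv (X N - L) + absv L"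
      using absv_triangle[of "X N - L" L] by simp
    moreover have "absv L \<le> absv (L - X N) + absv (X N)"
      using absv_triangle[of "L - X N" "X N"] by simp
    ultimately show ?thesis
      unfolding absv_minus_commute[of L] using absv_nonneg[of "X N - L"] by simp
  qed
  have "(\<lambda>N. absv (X N - L)) \<longlonglongrightarrow> 0"
    using assms unfolding tends_to_def .
  from tendsto_0_le[OF this always_eventually, of "\<lambda>N. absv (X N) - absv L" 1]
  have "(\<lambda>N. absv (X N) - absv L) \<longlonglongrightarrow> 0"
    using bound by blast
  then show ?thesis
    by (simp add: LIM_zero_iff)
qed

lemma tends_to_add: "tends_to X L \<Longrightarrow> tends_to Y K \<Longrightarrow> tends_to (\<lambda>N. X N + Y N) (L + K)"
proof (rule tends_to_dominated)
  show "absv (X N + Y N - (L + K)) \<le> absv (X N - L) + absv (Y N - K)" for N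
    using absv_triangle[of "X N - L" "Y N - K"] by (simp add: algebra_simps)
qed (simp_all add: tends_to_def tendsto_add_zero)

lemma tends_to_minus: "tends_to X L \<Longrightarrow> tends_to (\<lambda>N. - X N) (- L)"
  unfolding tends_to_def using absv_minus_commute by simp

lemma tends_to_diff: "tends_to X L \<Longrightarrow> tends_to Y K \<Longrightarrow> tends_to (\<lambda>N. X N - Y N) (L - K)"
  using tends_to_add[of X L "\<lambda>N. - Y N" "- K"] tends_to_minus[of Y K] by simp

lemma tends_to_mult:
  assumes X: "tends_to X L" and Y: "tends_to Y K"
  shows "tends_to (\<lambda>N. X N * Y N) (L * K)"
proof (rule tends_to_dominated)
  fix N
  have "X N * Y N - L * K = (X N - L) * Y N + L * (Y N - K)"
    by (simp add: algebra_simps)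
  then show "absv (X N * Y N - L * K) \<le> absv (X N - L) * absv (Y N) + absv L * absv (Y N - K)"
    using absv_triangle[of "(X N - L) * Y N" "L * (Y N - K)"] by (simp only: absv_mult)
next
  have "(\<lambda>N. absv (X N - L)) \<longlonglongrightarrow> 0" "(\<lambda>N. absv (Y N - K)) \<longlonglongrightarrow> 0"
    using X Y unfolding tends_to_def by auto
  from tendsto_add[OF tendsto_mult[OF this(1) tends_to_absv[OF Y]] tendsto_mult[OF tendsto_const this(2)]]
  show "(\<lambda>N. absv (X N - L) * absv (Y N) + absv L * absv (Y N - K)) \<longlonglongrightarrow> 0"
    by simp
qed

lemma tends_to_power:
  assumes "tends_to X L"
  shows "tends_to (\<lambda>N. X N ^ m) (L ^ m)"
proof (induction m)
  case (Suc m)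
  show ?case
    using tends_to_mult[OF assms Suc] by simp
qed (simp add: tends_to_const)

lemma tends_to_sum:
  "(\<And>i. i \<in> A \<Longrightarrow> tends_to (X i) (L i)) \<Longrightarrow> tends_to (\<lambda>N. \<Sum>i\<in>A. X i N) (\<Sum>i\<in>A. L i)"
proof (induction A rule: infinite_finite_induct)
  case (insert i A)
  then show ?case
    using tends_to_add[of "X i" "L i" "\<lambda>N. \<Sum>i\<in>A. X i N"] by simp
qed (simp_all add: tends_to_const)

lemma tends_to_inverse:
  assumes X: "tends_to X L" and "L \<noteq> 0"
  shows "tends_to (\<lambda>N. inverse (X N)) (inverse L)"
proof -
  have lim: "(\<lambda>N. absv (X N - L)) \<longlonglongrightarrow> 0"
    using X unfolding tends_to_def .
  have "0 < absv L"
    using \<open>L \<noteq> 0\<close> absv_nonneg[of L] by (simp add: less_le)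
  with lim have "eventually (\<lambda>N. absv (X N - L) < absv L) sequentially"
    by (rule order_tendstoD)
  then have "eventually (\<lambda>N. norm (absv (inverse (X N) - inverse L)) \<le> norm (absv (X N - L)) * inverse (absv L ^ 2)) sequentially"
  proof eventually_elim
    case (elim N)
    then have "absv (X N) = absv L" "X N \<noteq> 0"
      using absv_eq_if_close[of "X N" L] \<open>L \<noteq> 0\<close> by auto
    then show ?case
      using \<open>L \<noteq> 0\<close> absv_nonneg[of "X N - L"] absv_nonneg[of L]
      by (simp add: inverse_diff_inverse absv_minus_commute[of L] power2_eq_square abs_mult mult_ac)
  qed
  from tendsto_0_le[OF lim this] show ?thesis
    unfolding tends_to_def .
qed

lemma tends_to_divide_const: "tends_to X L \<Longrightarrow> tends_to (\<lambda>N. X N / c) (L / c)"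
  using tends_to_mult[OF _ tends_to_const[of "inverse c"]] by (simp only: divide_inverse)

lemma tends_to_unique: "tends_to X L \<Longrightarrow> tends_to X K \<Longrightarrow> L = K"
  using tends_to_diff[of X L X K] by (simp add: tends_to_def LIMSEQ_const_iff)

definition principal_unit :: "'a \<Rightarrow> bool" where
  "principal_unit u \<longleftrightarrow> absv (u - 1) < 1"

lemma principal_unit_absv: "principal_unit u \<Longrightarrow> absv u = 1"
  unfolding principal_unit_def using absv_eq_if_close[of u 1] by simp

lemma principal_unit_nonzero: "principal_unit u \<Longrightarrow> u \<noteq> 0"
  using principal_unit_absv by fastforce

lemma principal_unit_mult:
  assumes "principal_unit u" "principal_unit v"
  shows "principal_unit (u * v)"
proof -
  have "u * v - 1 = u * (v - 1) + (u - 1)"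
    by (simp add: algebra_simps)
  then have "absv (u * v - 1) \<le> max (absv u * absv (v - 1)) (absv (u - 1))"
    using absv_add_le_max[of "u * (v - 1)" "u - 1"] by (simp only: absv_mult)
  then show ?thesis
    using assms principal_unit_absv[of u] unfolding principal_unit_def by simp
qed

lemma principal_unit_power: "principal_unit u \<Longrightarrow> principal_unit (u ^ n)"
  by (induction n) (simp_all add: principal_unit_mult principal_unit_def[of 1])

lemma principal_unit_inverse:
  assumes "principal_unit u"
  shows "principal_unit (inverse u)"
proof -
  have "inverse u - 1 = (1 - u) * inverse u"
    using principal_unit_nonzero[OF assms] by (simp add: field_simps)
  then show ?thesis
    using assms principal_unit_absv[OF assms] absv_minus_commute[of u 1]
    unfolding principal_unit_def by simp
qed

end

locale padic_abs = ultrametric_abs absv for absv :: "'a::field \<Rightarrow> real" +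
  fixes p :: nat
  assumes prime_p: "prime p" and odd_p: "odd p"
    and absv_of_int: "m \<noteq> 0 \<Longrightarrow> absv (of_int m) = real p powr - real (multiplicity (int p) m)"
begin

lemma p_gt_1: "1 < p"
  using prime_p prime_gt_1_nat by blast

lemma absv_of_int_dvd_le:
  assumes "int p dvd m"
  shows "absv (of_int m) \<le> 1 / real p"
proof (cases "m = 0")
  case False
  then have "multiplicity (int p) m \<ge> 1"
    using assms p_gt_1 by (intro multiplicity_geI) auto
  then have "real p powr - real (multiplicity (int p) m) \<le> real p powr - 1"
    using p_gt_1 by (intro powr_mono) auto
  then show ?thesis
    using absv_of_int[OF False] p_gt_1 by (simp add: powr_minus_divide)
qed simp

lemma of_nat_neq_0: "n \<noteq> 0 \<Longrightarrow> (of_nat n :: 'a) \<noteq> 0"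
  using absv_of_int[of "int n"] p_gt_1 by auto

lemma absv_of_nat_p_power: "absv (of_nat (p ^ N)) = (1 / real p) ^ N"
proof -
  have "multiplicity (int p) (int p ^ N) = N"
    using p_gt_1 by (simp add: multiplicity_same_power')
  then show ?thesis
    using absv_of_int[of "int p ^ N"] p_gt_1 by (simp add: powr_minus_divide powr_realpow power_one_over)
qed

lemma absv_2: "absv (2 :: 'a) = 1"
proof -
  have "\<not> int p dvd 2"
  proof
    assume "int p dvd 2"
    then have "p dvd 2"
      by (metis int_dvd_int_iff of_nat_numeral)
    then have "p \<le> 2"
      by (simp add: dvd_imp_le)
    with p_gt_1 odd_p show False
      by (cases "p = 2") auto
  qed
  then have "multiplicity (int p) 2 = 0"
    by (simp add: not_dvd_imp_multiplicity_0)
  then show ?thesis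
    using absv_of_int[of 2] p_gt_1 by simp
qed

lemma absv_one_plus_principal_unit:
  assumes "principal_unit u"
  shows "absv (1 + u) = 1"
  using absv_eq_if_close[of "1 + u" 2] assms absv_2 unfolding principal_unit_def by simp

lemma absv_binomial_prime_le:
  assumes "0 < j" "j < p"
  shows "absv (of_nat (p choose j) :: 'a) \<le> 1 / real p"
  using absv_of_int_dvd_le[of "int (p choose j)"] dvd_choose_prime[OF assms(2)] assms prime_p by simp

text \<open>The binomial expansion of \<open>(1 + y)\<^sup>p\<close>: every middle coefficient is divisible by \<open>p\<close>,
  and the top term is \<open>y\<^sup>p\<close>.\<close>
lemma absv_power_p_minus_1_le:
  assumes "absv (v - 1) \<le> r" "r \<le> r0" "r0 < 1"
  shows "absv (v ^ p - 1) \<le> r * max (1 / real p) (r0 ^ (p - 1))"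
proof -
  define y where "y = v - 1"
  define c where "c = max (1 / real p) (r0 ^ (p - 1))"
  have c0: "0 \<le> c"
    unfolding c_def by (simp add: le_max_iff_disj)
  have r: "0 \<le> r" "r \<le> 1" "absv y \<le> r"
    using assms absv_nonneg[of "v - 1"] unfolding y_def by linarith+
  have p: "p = Suc (p - 1)"
    using p_gt_1 by simp
  have "v ^ p = (\<Sum>j\<le>p. of_nat (p choose j) * y ^ j)"
    using binomial_ring[of y 1 p] by (simp add: y_def)
  also have "\<dots> = 1 + (\<Sum>i\<le>p - 1. of_nat (p choose Suc i) * y ^ Suc i)"
    by (subst p, subst sum.atMost_Suc_shift) simp
  finally have expand: "v ^ p - 1 = (\<Sum>i\<le>p - 1. of_nat (p choose Suc i) * y ^ Suc i)"
    by simp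
  have "absv (of_nat (p choose Suc i) * y ^ Suc i) \<le> r * c" if "i \<le> p - 1" for i
  proof (cases "Suc i < p")
    case True
    have "absv y ^ Suc i \<le> absv y"
      using r absv_nonneg[of y] by (simp add: mult_left_le power_le_one)
    then have "absv y ^ Suc i \<le> r"
      using r(3) by linarith
    then have "absv (of_nat (p choose Suc i) :: 'a) * absv y ^ Suc i \<le> 1 / real p * r"
      using absv_binomial_prime_le[of "Suc i"] True absv_nonneg by (intro mult_mono) auto
    also have "\<dots> \<le> r * c"
      using mult_right_mono[of "1 / real p" c r] r(1) by (simp add: c_def mult.commute)
    finally show ?thesis by simp
  next
    case False
    then have "Suc i = p"
      using that p_gt_1 by simp
    then have "absv (of_nat (p choose Suc i) * y ^ Suc i) = absv y ^ p"
      by simp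
    also have "\<dots> \<le> r ^ p"
      by (rule power_mono[OF r(3) absv_nonneg])
    also have "\<dots> = r * r ^ (p - 1)"
      using p by (metis power_Suc)
    also have "\<dots> \<le> r * c"
      using r assms(2) power_mono[of r r0 "p - 1"] unfolding c_def by (intro mult_left_mono) auto
    finally show ?thesis .
  qed
  then show ?thesis
    unfolding expand c_def[symmetric] using r(1) c0 by (intro absv_sum_le) auto
qed

lemma tends_to_power_p_power:
  assumes "principal_unit u"
  shows "tends_to (\<lambda>N. u ^ (p ^ N)) 1"
proof -
  define r0 where "r0 = absv (u - 1)"
  define c where "c = max (1 / real p) (r0 ^ (p - 1))"
  have r0: "0 \<le> r0" "r0 < 1"
    using assms absv_nonneg unfolding principal_unit_def r0_def by auto
  have c: "0 \<le> c" "c < 1"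
    using p_gt_1 r0 unfolding c_def by (auto simp: le_max_iff_disj power_less_one_iff)
  have bound: "absv (u ^ (p ^ N) - 1) \<le> r0 * c ^ N" for N
  proof (induction N)
    case (Suc N)
    have "r0 * c ^ N \<le> r0"
      using r0 c by (simp add: mult_left_le power_le_one)
    then have "absv ((u ^ (p ^ N)) ^ p - 1) \<le> r0 * c ^ N * c"
      using absv_power_p_minus_1_le[OF Suc _ r0(2)] unfolding c_def by simp
    moreover have "u ^ (p ^ Suc N) = (u ^ (p ^ N)) ^ p"
      by (simp add: mult.commute flip: power_mult)
    ultimately show ?case
      by (simp add: mult_ac)
  qed (simp add: r0_def)
  have "(\<lambda>N. r0 * c ^ N) \<longlonglongrightarrow> r0 * 0"
    using c by (intro tendsto_intros LIMSEQ_power_zero) auto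
  then show ?thesis
    using bound by (intro tends_to_dominated) auto
qed

lemma tends_to_qnum_p_power:
  assumes "principal_unit s"
  shows "tends_to (\<lambda>N. qnum s (p ^ N)) 0"
proof (cases "s = 1")
  case True
  have "(\<lambda>N. (1 / real p) ^ N) \<longlonglongrightarrow> 0"
    using p_gt_1 by (intro LIMSEQ_power_zero) auto
  then show ?thesis
    using True absv_of_nat_p_power by (intro tends_to_dominated) (auto simp: qnum_def)
next
  case False
  have "qnum s (p ^ N) = (s ^ (p ^ N) - 1) * (- inverse (1 - s))" for N
    using False unfolding qnum_def by (simp add: field_simps)
  moreover have "tends_to (\<lambda>N. (s ^ (p ^ N) - 1) * (- inverse (1 - s))) ((1 - 1) * (- inverse (1 - s)))"
    by (intro tends_to_mult tends_to_diff tends_to_power_p_power assms tends_to_const)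
  ultimately show ?thesis
    by simp
qed

lemma tends_to_qnum_p_power_add:
  assumes "principal_unit s"
  shows "tends_to (\<lambda>N. qnum s (p ^ N + j)) (qnum s j)"
  using tends_to_add[OF tends_to_qnum_p_power[OF assms]
      tends_to_mult[OF tends_to_power_p_power[OF assms] tends_to_const[of "qnum s j"]]]
  by (simp add: qnum_add)

section \<open>Riemann sums of the fermionic integral\<close>

definition riemann_sum :: "'a \<Rightarrow> (nat \<Rightarrow> 'a) \<Rightarrow> nat \<Rightarrow> 'a" where
  "riemann_sum Q f N = (\<Sum>\<xi><p ^ N. f \<xi> * (- Q) ^ \<xi>) / ((1 + Q ^ (p ^ N)) / (1 + Q))"

definition has_ferm_int :: "'a \<Rightarrow> (nat \<Rightarrow> 'a) \<Rightarrow> 'a \<Rightarrow> bool" where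
  "has_ferm_int Q f L \<longleftrightarrow> tends_to (riemann_sum Q f) L"

lemma ferm_int_eqI:
  assumes "has_ferm_int Q f L"
  shows "ferm_int p absv Q f = L"
  unfolding ferm_int_def
proof (rule the_equality)
  show "(\<lambda>N. absv ((\<Sum>\<xi><p ^ N. f \<xi> * (- Q) ^ \<xi>) / ((1 + Q ^ p ^ N) / (1 + Q)) - L)) \<longlonglongrightarrow> 0"
    using assms unfolding has_ferm_int_def tends_to_def riemann_sum_def .
next
  fix K
  assume "(\<lambda>N. absv ((\<Sum>\<xi><p ^ N. f \<xi> * (- Q) ^ \<xi>) / ((1 + Q ^ p ^ N) / (1 + Q)) - K)) \<longlonglongrightarrow> 0"
  then show "K = L"
    using assms tends_to_unique[of "riemann_sum Q f" K L] unfolding has_ferm_int_def tends_to_def riemann_sum_def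
    by blast
qed

lemma riemann_sum_eq: "riemann_sum Q f N = (1 + Q) / (1 + Q ^ (p ^ N)) * (\<Sum>\<xi><p ^ N. f \<xi> * (- Q) ^ \<xi>)"
  unfolding riemann_sum_def by (simp add: field_simps)

lemma riemann_sum_cong:
  "(\<And>x. x < p ^ N \<Longrightarrow> f x = g x) \<Longrightarrow> riemann_sum Q f N = riemann_sum Q g N"
  unfolding riemann_sum_def by (metis (no_types, lifting) lessThan_iff sum.cong)

lemma riemann_sum_lincomb:
  "riemann_sum Q (\<lambda>\<xi>. \<Sum>i\<in>A. c i * f i \<xi>) N = (\<Sum>i\<in>A. c i * riemann_sum Q (f i) N)"
  unfolding riemann_sum_eq
  by (simp add: sum_distrib_left sum_distrib_right sum.swap[of _ A] mult_ac)

lemma riemann_sum_cmult: "riemann_sum Q (\<lambda>\<xi>. c * f \<xi>) N = c * riemann_sum Q f N"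
  unfolding riemann_sum_eq by (simp add: sum_distrib_left mult_ac)

lemma riemann_sum_diff: "riemann_sum Q (\<lambda>\<xi>. f \<xi> - g \<xi>) N = riemann_sum Q f N - riemann_sum Q g N"
  unfolding riemann_sum_eq by (simp add: sum_subtractf algebra_simps)

lemma has_ferm_int_lincomb:
  assumes "\<And>i. i \<in> A \<Longrightarrow> has_ferm_int Q (f i) (L i)"
  shows "has_ferm_int Q (\<lambda>\<xi>. \<Sum>i\<in>A. c i * f i \<xi>) (\<Sum>i\<in>A. c i * L i)"
  using assms unfolding has_ferm_int_def riemann_sum_lincomb
  by (intro tends_to_sum tends_to_mult tends_to_const)

lemma absv_riemann_sum_le:
  assumes "principal_unit Q" "\<And>x. absv (f x) \<le> B"
  shows "absv (riemann_sum Q f N) \<le> B"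
proof -
  have "absv ((1 + Q) / (1 + Q ^ (p ^ N))) = 1"
    using assms(1) principal_unit_power by (simp add: absv_one_plus_principal_unit)
  moreover have B: "0 \<le> B"
    using assms(2)[of 0] absv_nonneg[of "f 0"] by linarith
  then have "absv (\<Sum>\<xi><p ^ N. f \<xi> * (- Q) ^ \<xi>) \<le> B"
    using assms principal_unit_absv[OF assms(1)] by (intro absv_sum_le) auto
  ultimately show ?thesis
    unfolding riemann_sum_eq absv_mult using B by simp
qed

lemma riemann_sum_Suc:
  "Q * riemann_sum Q (\<lambda>x. f (Suc x)) N + riemann_sum Q f N
     = (1 + Q) / (1 + Q ^ (p ^ N)) * (f 0 + f (p ^ N) * Q ^ (p ^ N))"
proof -
  define M where "M = p ^ N"
  have shift: "Q * (\<Sum>\<xi><M. f (Suc \<xi>) * (- Q) ^ \<xi>) = - (\<Sum>\<xi><M. f (Suc \<xi>) * (- Q) ^ Suc \<xi>)"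
    by (simp add: sum_distrib_left mult_ac flip: sum_negf)
  have "(- Q) ^ M = - (Q ^ M)"
    using odd_p unfolding M_def by simp
  then have "(\<Sum>\<xi><M. f \<xi> * (- Q) ^ \<xi> - f (Suc \<xi>) * (- Q) ^ Suc \<xi>) = f 0 + f M * Q ^ M"
    using sum_lessThan_telescope'[of "\<lambda>\<xi>. f \<xi> * (- Q) ^ \<xi>" M] by simp
  then have "Q * (\<Sum>\<xi><M. f (Suc \<xi>) * (- Q) ^ \<xi>) + (\<Sum>\<xi><M. f \<xi> * (- Q) ^ \<xi>) = f 0 + f M * Q ^ M"
    unfolding shift sum_subtractf by simp
  then show ?thesis
    unfolding riemann_sum_eq M_def[symmetric] by (simp only: mult.left_commute[of Q] flip: distrib_left)
qed

lemma tends_to_ferm_weight: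
  assumes "principal_unit Q"
  shows "tends_to (\<lambda>N. (1 + Q) / (1 + Q ^ (p ^ N))) ((1 + Q) / 2)"
proof -
  have "tends_to (\<lambda>N. 1 + Q ^ (p ^ N)) 2"
    using tends_to_add[OF tends_to_const[of 1] tends_to_power_p_power[OF assms]] by simp
  then have "tends_to (\<lambda>N. inverse (1 + Q ^ (p ^ N))) (inverse 2)"
    using absv_2 by (intro tends_to_inverse) auto
  from tends_to_mult[OF tends_to_const this] show ?thesis
    by (simp only: divide_inverse)
qed

text \<open>The functional equation \<open>Q I(f(x+1)) + I(f) = [2]\<^sub>Q f(0)\<close> of the fermionic integral,
  with the boundary value \<open>f(p\<^sup>N)\<close> kept general.\<close>
lemma has_ferm_int_Suc:
  assumes Q: "principal_unit Q" and f: "has_ferm_int Q f L" and c: "tends_to (\<lambda>N. f (p ^ N)) c"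
  shows "has_ferm_int Q (\<lambda>x. f (Suc x)) (((1 + Q) / 2 * (f 0 + c) - L) / Q)"
proof -
  have Q0: "Q \<noteq> 0" "1 + Q \<noteq> 0"
    using principal_unit_nonzero[OF Q] absv_one_plus_principal_unit[OF Q] by auto
  have "riemann_sum Q (\<lambda>x. f (Suc x))
      = (\<lambda>N. ((1 + Q) / (1 + Q ^ (p ^ N)) * (f 0 + f (p ^ N) * Q ^ (p ^ N)) - riemann_sum Q f N) * inverse Q)"
    using riemann_sum_Suc[of Q f] Q0(1) by (intro ext) (simp add: field_simps)
  moreover have "tends_to (\<lambda>N. ((1 + Q) / (1 + Q ^ (p ^ N)) * (f 0 + f (p ^ N) * Q ^ (p ^ N)) - riemann_sum Q f N) * inverse Q)
      (((1 + Q) / 2 * (f 0 + c * 1) - L) * inverse Q)"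
    using f unfolding has_ferm_int_def
    by (intro tends_to_mult tends_to_diff tends_to_add tends_to_ferm_weight tends_to_power_p_power Q c tends_to_const)
  moreover have "((1 + Q) / 2 * (f 0 + c * 1) - L) * inverse Q = ((1 + Q) / 2 * (f 0 + c) - L) / Q"
    by (simp only: mult_1_right divide_inverse)
  ultimately show ?thesis
    unfolding has_ferm_int_def by simp
qed

lemma tends_to_riemann_sum_uniform:
  assumes Q: "principal_unit Q" and g: "has_ferm_int Q g L"
    and close: "\<And>N x. absv (f N x - g x) \<le> \<delta> N" and \<delta>: "\<delta> \<longlonglongrightarrow> 0"
  shows "tends_to (\<lambda>N. riemann_sum Q (f N) N) L"
proof -
  have "tends_to (\<lambda>N. riemann_sum Q (f N) N - riemann_sum Q g N) 0"
    using absv_riemann_sum_le[OF Q close] \<delta> by (intro tends_to_dominated) (simp_all add: riemann_sum_diff)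
  from tends_to_add[OF this g[unfolded has_ferm_int_def]] show ?thesis
    by simp
qed

section \<open>Existence of the integrals and the reflection formula\<close>

lemma absv_qnum_le:
  assumes "principal_unit s"
  shows "absv (qnum s x) \<le> 1"
proof (induction x)
  case (Suc x)
  have "absv (1 + s * qnum s x) \<le> max 1 (absv s * absv (qnum s x))"
    using absv_add_le_max[of 1 "s * qnum s x"] by simp
  then show ?case
    using Suc principal_unit_absv[OF assms] by (simp add: qnum_Suc)
qed simp

text \<open>Induction on \<open>l\<close>: by the binomial theorem the shift \<open>x \<mapsto> x + 1\<close> turns
  \<open>t\<^sup>x [x]\<^sub>s\<^sup>l\<close> into a combination of the \<open>t\<^sup>x [x]\<^sub>s\<^sup>i\<close> with \<open>i \<le> l\<close>, so the functional equation
  expresses the \<open>l\<close>-th Riemann sums through the lower ones.\<close>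
lemma has_ferm_int_qnum_power:
  assumes q: "principal_unit q" and t: "principal_unit t" and s: "principal_unit s"
  shows "\<exists>L. has_ferm_int q (\<lambda>x. t ^ x * qnum s x ^ l) L"
proof (induction l rule: less_induct)
  case (less l)
  define f where "f i x = t ^ x * qnum s x ^ i" for i x
  define A where "A i = riemann_sum q (f i)" for i
  define c where "c i = of_nat (l choose i) * s ^ i" for i
  define w where "w N = (1 + q) / (1 + q ^ (p ^ N))" for N
  have "\<forall>i. \<exists>L. i < l \<longrightarrow> has_ferm_int q (f i) L"
    using less unfolding f_def by blast
  then obtain L where L: "\<And>i. i < l \<Longrightarrow> has_ferm_int q (f i) (L i)"
    by metis
  have "f l (Suc x) = (\<Sum>i\<le>l. (t * c i) * f i x)" for x
    unfolding f_def c_def by (rule qnum_Suc_power)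
  then have shift: "riemann_sum q (\<lambda>x. f l (Suc x)) N = t * (\<Sum>i\<le>l. c i * A i N)" for N
    unfolding A_def using riemann_sum_lincomb[of q "\<lambda>i. t * c i" f "{..l}" N]
    by (simp add: sum_distrib_left mult.assoc)
  have "principal_unit (q * t * s ^ l)"
    using q t s by (intro principal_unit_mult principal_unit_power)
  then have d: "1 + q * t * c l \<noteq> 0"
    using absv_one_plus_principal_unit by (fastforce simp: c_def)
  have "q * (t * (\<Sum>i<l. c i * A i N) + t * c l * A l N) + A l N = w N * (f l 0 + f l (p ^ N) * q ^ (p ^ N))" for N
    using riemann_sum_Suc[of q "f l" N] unfolding shift w_def A_def
    by (simp add: lessThan_Suc_atMost[symmetric] algebra_simps)
  then have eq: "A l N = (w N * (f l 0 + f l (p ^ N) * q ^ (p ^ N)) - q * t * (\<Sum>i<l. c i * A i N)) / (1 + q * t * c l)" for N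
    using d by (simp add: field_simps)
  have "tends_to (\<lambda>N. f l (p ^ N)) (1 * 0 ^ l)"
    unfolding f_def by (intro tends_to_mult tends_to_power tends_to_power_p_power tends_to_qnum_p_power t s)
  then have "tends_to (A l) (((1 + q) / 2 * (f l 0 + 0 ^ l * 1) - q * t * (\<Sum>i<l. c i * L i)) / (1 + q * t * c l))"
    unfolding eq[abs_def] w_def using L unfolding has_ferm_int_def A_def
    by (intro tends_to_divide_const tends_to_mult tends_to_diff tends_to_add tends_to_sum tends_to_ferm_weight
        tends_to_power_p_power tends_to_const q) auto
  then show ?case
    unfolding has_ferm_int_def A_def f_def by blast
qed

lemma riemann_sum_inverse:
  assumes "principal_unit Q"
  shows "riemann_sum (inverse Q) f N = riemann_sum Q (\<lambda>j. f (p ^ N - Suc j)) N"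
proof -
  have "absv (1 + Q ^ (p ^ N)) = 1"
    by (rule absv_one_plus_principal_unit[OF principal_unit_power[OF assms]])
  then have "1 + Q ^ (p ^ N) \<noteq> 0"
    by auto
  with principal_unit_nonzero[OF assms] show ?thesis
    unfolding riemann_sum_eq using odd_p by (intro alternating_sum_reflect) simp_all
qed

lemma tends_to_one_minus_qnum_shift:
  assumes t: "principal_unit t" and s: "principal_unit s"
  shows "tends_to (\<lambda>N. t ^ (p ^ N + j) * (1 - qnum s (p ^ N + j)) ^ n) (t ^ j * (1 - qnum s j) ^ n)"
proof -
  have "tends_to (\<lambda>N. t ^ (p ^ N) * t ^ j * (1 - qnum s (p ^ N + j)) ^ n) (1 * t ^ j * (1 - qnum s j) ^ n)"
    by (intro tends_to_mult tends_to_power tends_to_diff tends_to_const tends_to_power_p_power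
        tends_to_qnum_p_power_add t s)
  then show ?thesis
    by (simp add: power_add)
qed

text \<open>Two applications of the functional equation; the boundary values are \<open>F 0 = 1\<close> and
  \<open>F 1 = 0\<close>, and \<open>F (x + 2) = t\<^sup>2\<close> times the integrand of the conclusion.\<close>
lemma has_ferm_int_Suc_Suc_one_minus_qnum:
  assumes q: "principal_unit q" and t: "principal_unit t" and s: "principal_unit s" and "n \<ge> 1"
    and I: "has_ferm_int q (\<lambda>x. t ^ x * (1 - qnum s x) ^ n) I"
  shows "has_ferm_int q (\<lambda>x. t ^ x * (- s * qnum s (Suc x)) ^ n) ((I - (1 + q)) / (q ^ 2 * t ^ 2))"
proof -
  define F where "F x = t ^ x * (1 - qnum s x) ^ n" for x
  have q0: "q \<noteq> 0" and t0: "t \<noteq> 0"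
    using q t principal_unit_nonzero by auto
  have "tends_to (\<lambda>N. F (p ^ N + j)) (F j)" for j
    unfolding F_def by (rule tends_to_one_minus_qnum_shift[OF t s])
  note lim = this[of 0, simplified] this[of 1, simplified]
  have F01: "F 0 = 1" "F (Suc 0) = 0"
    using \<open>n \<ge> 1\<close> by (simp_all add: F_def qnum_Suc)
  have "has_ferm_int q (\<lambda>x. F (Suc x)) (((1 + q) / 2 * (F 0 + F 0) - I) / q)"
    using has_ferm_int_Suc[OF q _ lim(1)] I unfolding F_def by simp
  moreover have "(1 + q) / 2 * (F 0 + F 0) = 1 + q"
    using absv_2 unfolding F01 by (auto simp: field_simps)
  ultimately have "has_ferm_int q (\<lambda>x. F (Suc x)) ((1 + q - I) / q)"
    by simp
  from has_ferm_int_Suc[OF q this lim(2)]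
  have "has_ferm_int q (\<lambda>x. F (Suc (Suc x))) (((1 + q) / 2 * (F (Suc 0) + F (Suc 0)) - (1 + q - I) / q) / q)"
    by simp
  moreover have "((1 + q) / 2 * (F (Suc 0) + F (Suc 0)) - (1 + q - I) / q) / q = (I - (1 + q)) / q ^ 2"
    using F01 q0 by (simp add: field_simps power2_eq_square)
  ultimately have "has_ferm_int q (\<lambda>x. inverse (t ^ 2) * F (Suc (Suc x))) (inverse (t ^ 2) * ((I - (1 + q)) / q ^ 2))"
    unfolding has_ferm_int_def riemann_sum_cmult by (intro tends_to_mult tends_to_const) simp
  moreover have "inverse (t ^ 2) * F (Suc (Suc x)) = t ^ x * (- s * qnum s (Suc x)) ^ n" for x
    using t0 by (simp add: F_def qnum_Suc[of s "Suc x"] power2_eq_square field_simps)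
  ultimately show ?thesis
    by (simp add: field_simps)
qed

lemma power_p_power_pred:
  fixes u :: 'a
  assumes "u \<noteq> 0"
  shows "inverse u ^ (p ^ N - 1) = u * inverse u ^ (p ^ N)"
proof -
  have "p ^ N \<noteq> 0"
    using p_gt_1 by simp
  then obtain k where k: "p ^ N = Suc k"
    using not0_implies_Suc by blast
  then show ?thesis
    using assms by (simp add: mult.assoc[symmetric])
qed

lemma absv_reflected_integrand_diff_le:
  assumes t: "principal_unit t" and s: "principal_unit s"
    and e: "absv e \<le> 1" and b: "absv b = 1"
  shows "absv (t ^ j * (e - b * qnum s (Suc j)) ^ n - t ^ j * (- s * qnum s (Suc j)) ^ n) \<le> absv e + absv (b - s)"
proof -
  define x where "x = qnum s (Suc j)"
  have x: "absv x \<le> 1"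
    unfolding x_def by (rule absv_qnum_le[OF s])
  have "absv (e - b * x) \<le> 1"
    using absv_diff_le_max[of e "b * x"] e b x by simp
  moreover have "absv (- s * x) \<le> 1"
    using x principal_unit_absv[OF s] by simp
  ultimately have "absv ((e - b * x) ^ n - (- s * x) ^ n) \<le> absv ((e - b * x) - (- s * x))"
    by (rule absv_power_diff_le)
  also have "\<dots> = absv (e - (b - s) * x)"
    by (rule arg_cong[where f = absv]) (simp add: algebra_simps)
  also have "\<dots> \<le> absv e + absv (b - s) * absv x"
    using absv_triangle[of e "- ((b - s) * x)"] by simp
  also have "\<dots> \<le> absv e + absv (b - s)"
    using x absv_nonneg[of "b - s"] by (simp add: mult_left_le)
  finally show ?thesis
    using principal_unit_absv[OF principal_unit_power[OF t]]
    unfolding x_def by (simp flip: right_diff_distrib)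
qed

lemma riemann_sum_inverse_qnum_power:
  assumes q: "principal_unit q" and t0: "t \<noteq> 0" and s0: "s \<noteq> 0"
  shows "riemann_sum (inverse q) (\<lambda>x. inverse t ^ x * qnum (inverse s) x ^ n) N
    = inverse t ^ (p ^ N - 1) *
      riemann_sum q (\<lambda>x. t ^ x * (qnum (inverse s) (p ^ N) - inverse s ^ (p ^ N - 1) * qnum s (Suc x)) ^ n) N"
proof -
  have "inverse t ^ (p ^ N - Suc j) * qnum (inverse s) (p ^ N - Suc j) ^ n
      = inverse t ^ (p ^ N - 1) * (t ^ j * (qnum (inverse s) (p ^ N) - inverse s ^ (p ^ N - 1) * qnum s (Suc j)) ^ n)"
    if "j < p ^ N" for j
  proof -
    have "inverse t ^ (p ^ N - 1) = inverse t ^ (p ^ N - Suc j) * inverse t ^ j"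
      using that by (simp flip: power_add)
    then have "inverse t ^ (p ^ N - Suc j) = inverse t ^ (p ^ N - 1) * t ^ j"
      using t0 by (simp add: power_inverse field_simps)
    then show ?thesis
      unfolding qnum_reflect[OF s0 that] by (simp only: mult_ac)
  qed
  then show ?thesis
    unfolding riemann_sum_inverse[OF q] riemann_sum_cmult[symmetric] by (rule riemann_sum_cong)
qed

text \<open>After the reflection, \<open>[p^N - 1 - \<xi>]_(1/s) = [p^N]_(1/s) - s^(1 - p^N) [\<xi> + 1]_s\<close> tends to
  \<open>-s [\<xi> + 1]_s = 1 - [\<xi> + 2]_s\<close> uniformly in \<open>\<xi>\<close>.\<close>
lemma has_ferm_int_inverse:
  assumes q: "principal_unit q" and t: "principal_unit t" and s: "principal_unit s" and "n \<ge> 1"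
    and I: "has_ferm_int q (\<lambda>x. t ^ x * (1 - qnum s x) ^ n) I"
  shows "has_ferm_int (inverse q) (\<lambda>x. inverse t ^ x * qnum (inverse s) x ^ n) ((I - (1 + q)) / (q ^ 2 * t))"
proof -
  define J where "J = (I - (1 + q)) / (q ^ 2 * t ^ 2)"
  define \<psi> where "\<psi> N x = t ^ x * (qnum (inverse s) (p ^ N) - inverse s ^ (p ^ N - 1) * qnum s (Suc x)) ^ n" for N x
  define \<delta> where "\<delta> N = absv (qnum (inverse s) (p ^ N)) + absv (inverse s ^ (p ^ N - 1) - s)" for N
  have t0: "t \<noteq> 0" and s0: "s \<noteq> 0"
    using t s principal_unit_nonzero by auto
  have s': "principal_unit (inverse s)"
    by (rule principal_unit_inverse[OF s])
  have reflect: "riemann_sum (inverse q) (\<lambda>x. inverse t ^ x * qnum (inverse s) x ^ n) N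
      = inverse t ^ (p ^ N - 1) * riemann_sum q (\<psi> N) N" for N
    unfolding \<psi>_def by (rule riemann_sum_inverse_qnum_power[OF q t0 s0])
  have close: "absv (\<psi> N x - t ^ x * (- s * qnum s (Suc x)) ^ n) \<le> \<delta> N" for N x
    unfolding \<psi>_def \<delta>_def using absv_qnum_le[OF s'] principal_unit_absv[OF principal_unit_power[OF s']]
    by (intro absv_reflected_integrand_diff_le t s) auto
  have "tends_to (\<lambda>N. inverse s ^ (p ^ N - 1)) (s * 1)"
    unfolding power_p_power_pred[OF s0] by (intro tends_to_mult tends_to_const tends_to_power_p_power s')
  then have "\<delta> \<longlonglongrightarrow> 0 + absv (s * 1 - s)"
    unfolding \<delta>_def using tends_to_qnum_p_power[OF s'] unfolding tends_to_def
    by (intro tendsto_add tends_to_absv[unfolded tends_to_def]) simp_all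
  then have "tends_to (\<lambda>N. riemann_sum q (\<psi> N) N) J"
    using has_ferm_int_Suc_Suc_one_minus_qnum[OF q t s \<open>n \<ge> 1\<close> I] close unfolding J_def
    by (intro tends_to_riemann_sum_uniform[OF q]) auto
  then have "tends_to (\<lambda>N. t * inverse t ^ (p ^ N) * riemann_sum q (\<psi> N) N) (t * 1 * J)"
    by (intro tends_to_mult tends_to_const tends_to_power_p_power principal_unit_inverse t)
  moreover have "t * J = (I - (1 + q)) / (q ^ 2 * t)"
    using t0 principal_unit_nonzero[OF q] unfolding J_def by (simp add: field_simps power2_eq_square)
  ultimately show ?thesis
    unfolding has_ferm_int_def reflect power_p_power_pred[OF t0] by (simp add: mult.assoc)
qed

section \<open>The Genocchi identity\<close>

lemma genocchi_eq_ferm_int: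
  "genocchi p absv Q \<alpha> h (Suc i) / of_nat (Suc i) = ferm_int p absv Q (\<lambda>x. (Q ^ (h - 1)) ^ x * qnum (Q ^ \<alpha>) x ^ i)"
  using of_nat_neq_0[of "Suc i"] unfolding genocchi_def by (simp add: power_mult)

lemma has_ferm_int_one_minus_qnum_power:
  assumes q: "principal_unit q" and t: "principal_unit t" and s: "principal_unit s"
  shows "has_ferm_int q (\<lambda>x. t ^ x * (1 - qnum s x) ^ m)
    (\<Sum>l=0..m. of_nat (m choose l) * (-1) ^ l * ferm_int p absv q (\<lambda>x. t ^ x * qnum s x ^ l))"
proof -
  have "has_ferm_int q (\<lambda>x. t ^ x * qnum s x ^ l) (ferm_int p absv q (\<lambda>x. t ^ x * qnum s x ^ l))" for l
    using has_ferm_int_qnum_power[OF q t s, of l] ferm_int_eqI by blast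
  moreover have "t ^ x * (1 - qnum s x) ^ m = (\<Sum>l=0..m. (of_nat (m choose l) * (-1) ^ l) * (t ^ x * qnum s x ^ l))" for x
    using power_times_one_minus_power[of "qnum s x" 0 m] by (simp add: sum_distrib_left mult_ac)
  ultimately show ?thesis
    by (simp only: has_ferm_int_lincomb)
qed

lemma ferm_int_inverse_eq:
  assumes q: "principal_unit q" and t: "principal_unit t" and s: "principal_unit s" and "1 \<le> m"
  shows "(1 + q) + q ^ 2 * t * ferm_int p absv (inverse q) (\<lambda>x. inverse t ^ x * qnum (inverse s) x ^ m)
    = ferm_int p absv q (\<lambda>x. t ^ x * (1 - qnum s x) ^ m)"
proof -
  note I = has_ferm_int_one_minus_qnum_power[OF q t s, of m]
  have "q ^ 2 * t \<noteq> 0"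
    using q t principal_unit_nonzero by simp
  then show ?thesis
    using ferm_int_eqI[OF has_ferm_int_inverse[OF q t s \<open>1 \<le> m\<close> I]] ferm_int_eqI[OF I] by simp
qed

lemma ferm_int_alternating_sum:
  assumes q: "principal_unit q" and t: "principal_unit t" and s: "principal_unit s" and "k < n"
  shows "(\<Sum>l=0..n-k. of_nat ((n-k) choose l) * (-1) ^ l * ferm_int p absv q (\<lambda>x. t ^ x * qnum s x ^ (l + k))) =
         (\<Sum>l=0..k. of_nat (k choose l) * (-1) ^ (k + l) *
            ((1 + q) + q ^ 2 * t * ferm_int p absv (inverse q) (\<lambda>x. inverse t ^ x * qnum (inverse s) x ^ (n - l))))"
proof -
  define W where "W x = t ^ x * (qnum s x ^ k * (1 - qnum s x) ^ (n - k))" for x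
  have "has_ferm_int q (\<lambda>x. t ^ x * qnum s x ^ i) (ferm_int p absv q (\<lambda>x. t ^ x * qnum s x ^ i))" for i
    using has_ferm_int_qnum_power[OF q t s, of i] ferm_int_eqI by blast
  moreover have "W = (\<lambda>x. \<Sum>l=0..n-k. (of_nat ((n-k) choose l) * (-1) ^ l) * (t ^ x * qnum s x ^ (l + k)))"
    unfolding W_def power_times_one_minus_power by (simp add: sum_distrib_left mult_ac)
  ultimately have "has_ferm_int q W
      (\<Sum>l=0..n-k. of_nat ((n-k) choose l) * (-1) ^ l * ferm_int p absv q (\<lambda>x. t ^ x * qnum s x ^ (l + k)))"
    by (simp only: has_ferm_int_lincomb)
  note lhs = ferm_int_eqI[OF this]
  have "W = (\<lambda>x. \<Sum>l=0..k. (of_nat (k choose l) * (-1) ^ (k + l)) * (t ^ x * (1 - qnum s x) ^ (n - l)))"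
    using one_minus_power_times_power[of k n "1 - qnum s _"] \<open>k < n\<close>
    unfolding W_def by (simp add: sum_distrib_left mult_ac)
  then have "has_ferm_int q W
      (\<Sum>l=0..k. of_nat (k choose l) * (-1) ^ (k + l) * ferm_int p absv q (\<lambda>x. t ^ x * (1 - qnum s x) ^ (n - l)))"
    using ferm_int_eqI[OF has_ferm_int_one_minus_qnum_power[OF q t s]]
      has_ferm_int_one_minus_qnum_power[OF q t s] by (simp only: has_ferm_int_lincomb)
  note rhs = ferm_int_eqI[OF this]
  moreover have "(\<Sum>l=0..k. of_nat (k choose l) * (-1) ^ (k + l) *
        ((1 + q) + q ^ 2 * t * ferm_int p absv (inverse q) (\<lambda>x. inverse t ^ x * qnum (inverse s) x ^ (n - l))))
      = (\<Sum>l=0..k. of_nat (k choose l) * (-1) ^ (k + l) * ferm_int p absv q (\<lambda>x. t ^ x * (1 - qnum s x) ^ (n - l)))"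
    using \<open>k < n\<close> by (intro sum.cong refl) (simp add: ferm_int_inverse_eq[OF q t s])
  ultimately show ?thesis
    using lhs by simp
qed

end

theorem mainTheorem6:
  fixes absv :: "'a::field \<Rightarrow> real" and p :: nat and q :: 'a and \<alpha> h n k :: nat
  assumes "prime p" and "odd p" and "Cp_like p absv"
    and "absv (q - 1) < 1" and "h \<ge> 1" and "k < n"
  shows "(\<Sum>l=0..n-k. of_nat ((n-k) choose l) * (-1) ^ l *
            (genocchi p absv q \<alpha> h (l+k+1) / of_nat (l+k+1))) =
         (if k = 0 then
            (1 + q) + q ^ (h+1) * (genocchi p absv (inverse q) \<alpha> h (n+1) / of_nat (n+1))
          else
            (\<Sum>l=0..k. of_nat (k choose l) * (-1) ^ (k+l) *
               ((1 + q) + q ^ (h+1) * (genocchi p absv (inverse q) \<alpha> h (n-l+1) / of_nat (n-l+1)))))"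
proof -
  interpret padic_abs absv p
    using assms(1-3) unfolding Cp_like_def by unfold_locales auto
  have q: "principal_unit q"
    using assms(4) unfolding principal_unit_def .
  define t where "t = q ^ (h - 1)"
  define s where "s = q ^ \<alpha>"
  have ts: "principal_unit t" "principal_unit s"
    unfolding t_def s_def using q by (simp_all add: principal_unit_power)
  have lhs: "genocchi p absv q \<alpha> h (l + k + 1) / of_nat (l + k + 1)
      = ferm_int p absv q (\<lambda>x. t ^ x * qnum s x ^ (l + k))" for l
    using genocchi_eq_ferm_int[of q \<alpha> h "l + k"] unfolding t_def s_def by simp
  have "q ^ (h + 1) = q ^ 2 * t"
    using \<open>h \<ge> 1\<close> unfolding t_def by (simp flip: power_add)
  then have rhs: "q ^ (h + 1) * (genocchi p absv (inverse q) \<alpha> h (n - l + 1) / of_nat (n - l + 1))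
      = q ^ 2 * t * ferm_int p absv (inverse q) (\<lambda>x. inverse t ^ x * qnum (inverse s) x ^ (n - l))" for l
    using genocchi_eq_ferm_int[of "inverse q" \<alpha> h "n - l"] unfolding t_def s_def by (simp add: power_inverse)
  have "(\<Sum>l=0..n-k. of_nat ((n-k) choose l) * (-1) ^ l *
            (genocchi p absv q \<alpha> h (l+k+1) / of_nat (l+k+1))) =
        (\<Sum>l=0..k. of_nat (k choose l) * (-1) ^ (k+l) *
            ((1 + q) + q ^ (h+1) * (genocchi p absv (inverse q) \<alpha> h (n-l+1) / of_nat (n-l+1))))"
    unfolding lhs rhs by (rule ferm_int_alternating_sum[OF q ts \<open>k < n\<close>])
  then show ?thesis
    by simp
qed

end
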